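(* Let $Q$ be a finite multiset of tuples (all with the same QI values) and $l\ge1$ an integer. Let $\dot{Q}$ be obtained from $Q$ by repeatedly removing one tuple whose SA value is a pillar of the current multiset, until the current multiset is $l$-eligible (ties among pillars broken arbitrarily). Then for every $l$-eligible sub-multiset $Q' \subseteq Q$ and every SA value $v$, $h(Q',v) \le h(\dot{Q},v)$.
   Context: Tuples carry a sensitive attribute (SA) value. For a multiset $Q$ of tuples and an SA value $v$, $h(Q,v)$ is the number of tuples of $Q$ with SA value $v$; the pillar height is $h(Q)=\max_v h(Q,v)$, and a pillar of $Q$ is an SA value $v$ with $h(Q,v)=h(Q)$. $Q$ is $l$-eligible if $|Q| \ge l\cdot h(Q)$ (i.e., at most $|Q|/l$ tuples share any SA value; the empty multiset is $l$-eligible). *)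

theory Defs
  imports Main "HOL-Library.Multiset"
begin

text \<open>Tuples have abstract type 'a; sa gives the sensitive attribute value.
  All tuples share the same QI values, so QI is not modelled.\<close>

definition hcount :: "('a \<Rightarrow> 'b) \<Rightarrow> 'a multiset \<Rightarrow> 'b \<Rightarrow> nat" where
  "hcount sa Q v = size (filter_mset (\<lambda>t. sa t = v) Q)"

definition pillar_height :: "('a \<Rightarrow> 'b) \<Rightarrow> 'a multiset \<Rightarrow> nat" where
  "pillar_height sa Q = Max (insert 0 ((\<lambda>v. hcount sa Q v) ` (sa ` set_mset Q)))"

definition is_pillar :: "('a \<Rightarrow> 'b) \<Rightarrow> 'a multiset \<Rightarrow> 'b \<Rightarrow> bool" where
  "is_pillar sa Q v \<longleftrightarrow> hcount sa Q v = pillar_height sa Q"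

definition l_eligible :: "nat \<Rightarrow> ('a \<Rightarrow> 'b) \<Rightarrow> 'a multiset \<Rightarrow> bool" where
  "l_eligible l sa Q \<longleftrightarrow> size Q \<ge> l * pillar_height sa Q"

inductive peel :: "nat \<Rightarrow> ('a \<Rightarrow> 'b) \<Rightarrow> 'a multiset \<Rightarrow> 'a multiset \<Rightarrow> bool"
  for l sa where
  stop: "l_eligible l sa Q \<Longrightarrow> peel l sa Q Q"
| step: "\<not> l_eligible l sa Q \<Longrightarrow> x \<in># Q \<Longrightarrow> is_pillar sa Q (sa x)
          \<Longrightarrow> peel l sa (Q - {#x#}) R \<Longrightarrow> peel l sa Q R"

end

theory Submission
  imports Defs
begin

text \<open>Write \<open>Q' \<preceq> Q\<close> when \<open>h(Q',w) \<le> h(Q,w)\<close> for every SA value \<open>w\<close>, i.e. when the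
  multisets of SA values satisfy \<open>image_mset sa Q' \<subseteq># image_mset sa Q\<close>. This relation is
  invariant along the peeling: a pillar of a non-eligible \<open>Q\<close> cannot be a pillar of the same
  height in an eligible \<open>Q' \<preceq> Q\<close>, since that would force \<open>h(Q') = h(Q)\<close> and then
  \<open>l \<cdot> h(Q') = l \<cdot> h(Q) > |Q| \<ge> |Q'|\<close>. Hence removing one tuple of that pillar from \<open>Q\<close>
  preserves \<open>Q' \<preceq> Q\<close>, and the final multiset dominates \<open>Q'\<close>.\<close>

lemma hcount_eq_count_image_mset: "hcount sa Q v = count (image_mset sa Q) v"
  unfolding hcount_def by (induction Q) auto

lemma hcount_le_pillar_height: "hcount sa Q w \<le> pillar_height sa Q"
proof (cases "w \<in> sa ` set_mset Q")
  case True
  then show ?thesis unfolding pillar_height_def by (intro Max_ge) auto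
next
  case False
  then have "hcount sa Q w = 0" by (simp add: hcount_eq_count_image_mset count_eq_zero_iff)
  then show ?thesis by simp
qed

lemma pillar_height_attained: "\<exists>w. pillar_height sa Q = hcount sa Q w"
proof (cases "Q = {#}")
  case True
  then show ?thesis unfolding pillar_height_def hcount_def by simp
next
  case False
  then have "sa ` set_mset Q \<noteq> {}" by simp
  then have "pillar_height sa Q \<in> (\<lambda>v. hcount sa Q v) ` sa ` set_mset Q"
    unfolding pillar_height_def by (subst Max_insert) (auto simp: max_def intro: Max_in)
  then show ?thesis by blast
qed

lemma pillar_height_mono:
  assumes "image_mset sa Q' \<subseteq># image_mset sa Q"
  shows "pillar_height sa Q' \<le> pillar_height sa Q"
proof -
  obtain w where "pillar_height sa Q' = hcount sa Q' w"
    using pillar_height_attained[of sa Q'] by blast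
  also have "\<dots> \<le> hcount sa Q w"
    using assms by (simp add: hcount_eq_count_image_mset mset_subset_eq_count)
  also have "\<dots> \<le> pillar_height sa Q" by (rule hcount_le_pillar_height)
  finally show ?thesis .
qed

lemma hcount_less_at_pillar:
  assumes "image_mset sa Q' \<subseteq># image_mset sa Q"
    and "l_eligible l sa Q'" and "\<not> l_eligible l sa Q" and "is_pillar sa Q w"
  shows "hcount sa Q' w < hcount sa Q w"
proof (rule ccontr)
  assume "\<not> ?thesis"
  then have "pillar_height sa Q \<le> pillar_height sa Q'"
    using \<open>is_pillar sa Q w\<close> hcount_le_pillar_height[of sa Q' w]
    unfolding is_pillar_def by linarith
  then have "pillar_height sa Q' = pillar_height sa Q"
    using pillar_height_mono[OF assms(1)] by linarith
  moreover have "size Q' \<le> size Q"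
    using size_mset_mono[OF assms(1)] by simp
  ultimately show False
    using assms(2,3) unfolding l_eligible_def by (metis le_trans)
qed

lemma subseteq_mset_remove1:
  assumes "A \<subseteq># B" and "count A y < count B y"
  shows "A \<subseteq># B - {#y#}"
  unfolding subseteq_mset_def
proof
  fix z
  show "count A z \<le> count (B - {#y#}) z"
    using assms unfolding subseteq_mset_def by (cases "z = y") auto
qed

lemma peel_dominates:
  assumes "peel l sa Q R"
    and "l_eligible l sa Q'" and "image_mset sa Q' \<subseteq># image_mset sa Q"
  shows "image_mset sa Q' \<subseteq># image_mset sa R"
  using assms
proof (induction rule: peel.induct)
  case (stop Q)
  then show ?case by simp
next
  case (step Q x R)
  have "hcount sa Q' (sa x) < hcount sa Q (sa x)"
    by (rule hcount_less_at_pillar[OF step.prems(2,1) step.hyps(1,3)])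
  then have "image_mset sa Q' \<subseteq># image_mset sa Q - {#sa x#}"
    using step.prems(2) by (intro subseteq_mset_remove1) (simp_all add: hcount_eq_count_image_mset)
  then show ?case
    using step.hyps(2) by (intro step.IH[OF step.prems(1)]) (simp add: image_mset_Diff)
qed

text \<open>The argument works for every \<open>l\<close>.\<close>

theorem lemma4:
  fixes l :: nat and sa :: "'a \<Rightarrow> 'b" and Q Qdot Q' :: "'a multiset" and v :: 'b
  assumes "l \<ge> 1"
    and "peel l sa Q Qdot"
    and "Q' \<subseteq># Q"
    and "l_eligible l sa Q'"
  shows "hcount sa Q' v \<le> hcount sa Qdot v"
proof -
  have "image_mset sa Q' \<subseteq># image_mset sa Q"
    using assms(3) by (rule image_mset_subseteq_mono)
  then have "image_mset sa Q' \<subseteq># image_mset sa Qdot"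
    using assms(2,4) peel_dominates by blast
  then show ?thesis
    by (simp add: hcount_eq_count_image_mset mset_subset_eq_count)
qed

end
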